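(* Assume the setting described in the context. Then for every $t\ge0$ and every $z\in\mathbb C$ with $\omega_0^\epsilon(z)=0$ one has $\overline\partial X^\epsilon(t,z)=0$; that is, $X^\epsilon(t,\cdot)$ is conformal outside $\operatorname{supp}\omega_0^\epsilon$.
   Context: $\overline\partial=\frac12(\partial_x+i\partial_y)$, $\partial=\frac12(\partial_x-i\partial_y)$. Fix $\theta\in[0,2\pi]$ and $K(z)=\frac{e^{i\theta}}{2\pi z}$ on $\mathbb C\cong\mathbb R^2$. Let $\omega_0\in L^\infty(\mathbb C)$ be real-valued with compact support. For $\epsilon>0$ let $\omega_0^\epsilon\in C^\infty_c(\mathbb C)$ be real-valued with $\|\omega_0^\epsilon\|_\infty\le\|\omega_0\|_\infty$, $\|\omega_0^\epsilon\|_1\le\|\omega_0\|_1$ and $\|\omega_0^\epsilon-\omega_0\|_1\to0$. Let $\omega^\epsilon$ be the unique smooth solution of $\partial_t\omega^\epsilon+\mathbf v^\epsilon\cdot\nabla\omega^\epsilon=0$, $\mathbf v^\epsilon(t,\cdot)=K\ast\omega^\epsilon(t,\cdot)$, $\omega^\epsilon(0,\cdot)=\omega_0^\epsilon$, and let $X^\epsilon$ be the flow of $\mathbf v^\epsilon$: $\frac{d}{dt}X^\epsilon(t,z)=\mathbf v^\epsilon(t,X^\epsilon(t,z))$, $X^\epsilon(0,z)=z$ (a smooth family of diffeomorphisms of $\mathbb C$ with $\omega^\epsilon(t,X^\epsilon(t,z))=\omega_0^\epsilon(z)$). *)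

theory Defs
  imports "HOL-Analysis.Analysis"
begin

fun iter_dd :: "'a list \<Rightarrow> ('a::real_normed_vector \<Rightarrow> 'b::real_normed_vector) \<Rightarrow> 'a \<Rightarrow> 'b" where
  "iter_dd [] f = f"
| "iter_dd (d # ds) f = (\<lambda>x. frechet_derivative (iter_dd ds f) (at x) d)"

definition smooth_on :: "'a set \<Rightarrow> ('a::real_normed_vector \<Rightarrow> 'b::real_normed_vector) \<Rightarrow> bool" where
  "smooth_on S f \<longleftrightarrow> (\<exists>U g. open U \<and> S \<subseteq> U \<and> (\<forall>x\<in>S. g x = f x) \<and>
      (\<forall>ds. iter_dd ds g differentiable_on U))"

definition dbar :: "(complex \<Rightarrow> complex) \<Rightarrow> complex \<Rightarrow> complex" where
  "dbar f z = (frechet_derivative f (at z) 1 + \<i> * frechet_derivative f (at z) \<i>) / 2"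

definition kernel :: "real \<Rightarrow> complex \<Rightarrow> complex" where
  "kernel \<theta> z = exp (\<i> * of_real \<theta>) / (2 * of_real pi * z)"

end

theory Submission
  imports Defs
begin

text \<open>
  Differentiating the flow equation in space, the Jacobian \<open>J t = DX(t, z)\<close> solves
  \<open>J' = Dv(t, X(t, z)) J\<close>. The vorticity is transported, so it vanishes along the whole
  trajectory of a point z with \<open>\<omega>0(z) = 0\<close>. At a zero of a differentiable, bounded,
  compactly supported density the Biot-Savart velocity \<open>K * \<omega>\<close> is complex differentiable,
  because the density vanishes to first order there. Hence \<open>Dv(t, X(t, z))\<close> is multiplication
  by a complex number \<open>Q t\<close>, and the complex-linear equation \<open>J' = Q J\<close> preserves the relation
  \<open>J \<i> = \<i> J 1\<close> that holds for \<open>J 0 = id\<close>; this relation is \<open>dbar X = 0\<close>.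
\<close>

lemma mvt_along_line:
  fixes f :: "'a::real_normed_vector \<Rightarrow> real"
  assumes x: "0 < x"
    and df: "\<And>s. 0 \<le> s \<Longrightarrow> s \<le> x \<Longrightarrow> (f has_derivative f' (p + s *\<^sub>R a)) (at (p + s *\<^sub>R a))"
  shows "\<exists>\<xi>. 0 < \<xi> \<and> \<xi> < x \<and> f (p + x *\<^sub>R a) - f p = x * f' (p + \<xi> *\<^sub>R a) a"
proof -
  have "((\<lambda>s. f (p + s *\<^sub>R a)) has_real_derivative f' (p + s *\<^sub>R a) a) (at s)"
    if "0 \<le> s" "s \<le> x" for s
  proof -
    have line: "((\<lambda>s. p + s *\<^sub>R a) has_derivative (\<lambda>h. h *\<^sub>R a)) (at s)"
      by (auto intro!: derivative_eq_intros)
    have "linear (f' (p + s *\<^sub>R a))"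
      using df[OF that] by (rule has_derivative_linear)
    then have "f' (p + s *\<^sub>R a) (h *\<^sub>R a) = f' (p + s *\<^sub>R a) a * h" for h
      by (simp add: linear.scaleR)
    then show ?thesis
      using has_derivative_compose[OF line df[OF that]] by (simp add: has_field_derivative_def)
  qed
  then show ?thesis
    using MVT2[OF x, of "\<lambda>s. f (p + s *\<^sub>R a)"] by fastforce
qed

lemma second_difference_mean_value:
  fixes g :: "'a::real_normed_vector \<Rightarrow> real"
  assumes ball: "ball p r \<subseteq> U"
    and dg: "\<And>q. q \<in> U \<Longrightarrow> (g has_derivative g' q) (at q)"
    and da: "\<And>q. q \<in> U \<Longrightarrow> ((\<lambda>q. g' q a) has_derivative ga q) (at q)"
    and x: "0 < x" "x * (norm a + norm b) < r"
  shows "\<exists>q. dist q p \<le> x * (norm a + norm b) \<and>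
     g (p + x *\<^sub>R a + x *\<^sub>R b) - g (p + x *\<^sub>R a) - g (p + x *\<^sub>R b) + g p = x * (x * ga q b)"
proof -
  have near: "dist (p + s *\<^sub>R a + t *\<^sub>R b) p \<le> x * (norm a + norm b)"
    if "0 \<le> s" "s \<le> x" "0 \<le> t" "t \<le> x" for s t
  proof -
    have "norm (s *\<^sub>R a + t *\<^sub>R b) \<le> s * norm a + t * norm b"
      using that by (metis abs_of_nonneg norm_scaleR norm_triangle_ineq)
    also have "\<dots> \<le> x * norm a + x * norm b"
      using that by (intro add_mono mult_right_mono) auto
    finally show ?thesis by (simp add: dist_norm algebra_simps)
  qed
  have inU: "p + s *\<^sub>R a + t *\<^sub>R b \<in> U" if "0 \<le> s" "s \<le> x" "0 \<le> t" "t \<le> x" for s t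
    using near[OF that] x ball by (auto simp: dist_commute)
  obtain \<xi> where \<xi>: "0 < \<xi>" "\<xi> < x" and
    first: "g (p + x *\<^sub>R a + x *\<^sub>R b) - g (p + x *\<^sub>R a) - (g (p + x *\<^sub>R b) - g p) =
      x * (g' (p + \<xi> *\<^sub>R a + x *\<^sub>R b) a - g' (p + \<xi> *\<^sub>R a) a)"
  proof -
    have "((\<lambda>q. g (q + x *\<^sub>R b) - g q) has_derivative
        (\<lambda>h. g' (p + s *\<^sub>R a + x *\<^sub>R b) h - g' (p + s *\<^sub>R a) h)) (at (p + s *\<^sub>R a))"
      if "0 \<le> s" "s \<le> x" for s
      using inU[OF that, of x] inU[OF that, of 0] x
      by (auto intro!: derivative_eq_intros has_derivative_compose[of "\<lambda>q. q + x *\<^sub>R b", OF _ dg] dg)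
    from mvt_along_line[OF x(1), of "\<lambda>q. g (q + x *\<^sub>R b) - g q", OF this] that
    show ?thesis by (auto simp: algebra_simps)
  qed
  obtain \<eta> where \<eta>: "0 < \<eta>" "\<eta> < x" and
    second: "g' (p + \<xi> *\<^sub>R a + x *\<^sub>R b) a - g' (p + \<xi> *\<^sub>R a) a = x * ga (p + \<xi> *\<^sub>R a + \<eta> *\<^sub>R b) b"
    using mvt_along_line[OF x(1), of "\<lambda>q. g' q a" ga "p + \<xi> *\<^sub>R a" b] da inU \<xi> by auto
  show ?thesis
    using near[of \<xi> \<eta>] \<xi> \<eta> first second
    by (intro exI[of _ "p + \<xi> *\<^sub>R a + \<eta> *\<^sub>R b"]) (auto simp: algebra_simps)
qed

lemma mixed_partials_commute:
  fixes g :: "'a::real_normed_vector \<Rightarrow> real"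
  assumes U: "open U" and p: "p \<in> U"
    and dg: "\<And>q. q \<in> U \<Longrightarrow> (g has_derivative g' q) (at q)"
    and da: "\<And>q. q \<in> U \<Longrightarrow> ((\<lambda>q. g' q a) has_derivative ga q) (at q)"
    and db: "\<And>q. q \<in> U \<Longrightarrow> ((\<lambda>q. g' q b) has_derivative gb q) (at q)"
    and ca: "continuous (at p) (\<lambda>q. ga q b)"
    and cb: "continuous (at p) (\<lambda>q. gb q a)"
  shows "ga p b = gb p a"
proof -
  obtain r where r: "r > 0" "ball p r \<subseteq> U" using U p open_contains_ball by blast
  define N where "N = norm a + norm b"
  have "\<bar>ga p b - gb p a\<bar> \<le> 0 + e" if e: "e > 0" for e
  proof -
    obtain d1 where d1: "d1 > 0" "\<And>q. dist q p < d1 \<Longrightarrow> dist (ga q b) (ga p b) < e / 2"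
      using ca e unfolding continuous_at_eps_delta by (metis half_gt_zero)
    obtain d2 where d2: "d2 > 0" "\<And>q. dist q p < d2 \<Longrightarrow> dist (gb q a) (gb p a) < e / 2"
      using cb e unfolding continuous_at_eps_delta by (metis half_gt_zero)
    define d where "d = min r (min d1 d2)"
    define x where "x = d / (N + 1)"
    have "d > 0" "N \<ge> 0"
      using r d1 d2 by (auto simp: d_def N_def)
    then have x: "0 < x" "x * N < d"
      by (auto simp: x_def field_simps)
    then have "x * N < r" by (simp add: d_def)
    obtain q where q: "dist q p \<le> x * N"
      "g (p + x *\<^sub>R a + x *\<^sub>R b) - g (p + x *\<^sub>R a) - g (p + x *\<^sub>R b) + g p = x * (x * ga q b)"
      using second_difference_mean_value[OF r(2) dg da x(1)] \<open>x * N < r\<close> unfolding N_def by blast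
    obtain q' where q': "dist q' p \<le> x * N"
      "g (p + x *\<^sub>R b + x *\<^sub>R a) - g (p + x *\<^sub>R b) - g (p + x *\<^sub>R a) + g p = x * (x * gb q' a)"
      using second_difference_mean_value[OF r(2) dg db x(1), of a] \<open>x * N < r\<close>
      unfolding N_def by (auto simp: add.commute)
    have "ga q b = gb q' a"
      using q(2) q'(2) x(1) by (simp add: algebra_simps)
    moreover have "dist (ga q b) (ga p b) < e / 2" "dist (gb q' a) (gb p a) < e / 2"
      using q(1) q'(1) x(2) d1(2) d2(2) by (auto simp: d_def)
    ultimately show ?thesis unfolding dist_real_def by arith
  qed
  then show ?thesis
    using field_le_epsilon[of "\<bar>ga p b - gb p a\<bar>" 0] by simp
qed

lemma has_derivative_at_of_differentiable_on_open:
  assumes "f differentiable_on U" "open U" "q \<in> U"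
  shows "(f has_derivative frechet_derivative f (at q)) (at q)"
  using assms by (metis at_within_open differentiable_on_def frechet_derivative_works)

lemma frechet_derivative_mixed_commute:
  fixes G :: "'a::real_normed_vector \<Rightarrow> 'b::real_inner"
  assumes U: "open U" and p: "p \<in> U"
    and dG: "G differentiable_on U"
    and dA: "(\<lambda>q. frechet_derivative G (at q) a) differentiable_on U"
    and dB: "(\<lambda>q. frechet_derivative G (at q) b) differentiable_on U"
    and cA: "continuous_on U (\<lambda>q. frechet_derivative (\<lambda>q. frechet_derivative G (at q) a) (at q) b)"
    and cB: "continuous_on U (\<lambda>q. frechet_derivative (\<lambda>q. frechet_derivative G (at q) b) (at q) a)"
  shows "frechet_derivative (\<lambda>q. frechet_derivative G (at q) a) (at p) b =
         frechet_derivative (\<lambda>q. frechet_derivative G (at q) b) (at p) a"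
    (is "?L = ?R")
proof -
  note deriv = has_derivative_inner_left[OF has_derivative_at_of_differentiable_on_open[OF _ U]]
  have "?L \<bullet> e = ?R \<bullet> e" for e
    by (rule mixed_partials_commute[OF U p, where g="\<lambda>q. G q \<bullet> e"])
       (use cA cB U p in \<open>auto intro!: deriv dG dA dB continuous_intros
          simp: continuous_on_eq_continuous_at\<close>)
  then have "(?L - ?R) \<bullet> (?L - ?R) = 0"
    by (simp add: inner_diff_left)
  then show ?thesis by simp
qed

lemma exists_dyadic_scale:
  fixes r \<rho> :: real
  assumes "0 < \<rho>" "\<rho> < r"
  shows "\<exists>k::nat. r / 2 ^ (k + 1) \<le> \<rho> \<and> \<rho> < r / 2 ^ k"
proof -
  have ex: "\<exists>k::nat. r / 2 ^ k \<le> \<rho>"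
  proof -
    obtain k :: nat where "r / \<rho> < 2 ^ k"
      using real_arch_pow[of 2 "r / \<rho>"] by auto
    then show ?thesis
      using assms by (intro exI[of _ k]) (simp add: field_simps)
  qed
  define m where "m = (LEAST k. r / 2 ^ k \<le> \<rho>)"
  have m: "r / 2 ^ m \<le> \<rho>"
    unfolding m_def by (rule LeastI_ex[OF ex])
  have "m \<noteq> 0" using m assms by (intro notI) simp
  then obtain k where k: "m = k + 1" using not0_implies_Suc by auto
  have "\<not> r / 2 ^ k \<le> \<rho>"
    using Least_le[of "\<lambda>k. r / 2 ^ k \<le> \<rho>" k] k unfolding m_def by auto
  then show ?thesis using m k by (intro exI[of _ k]) auto
qed

text \<open>On the shell \<open>r / 2^(k+1) \<le> |x - y| < r / 2^k\<close> the integrand is at most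
  \<open>2^(k+1) / r\<close> times the indicator of the disc of radius \<open>r / 2^k\<close>, whose area is
  \<open>\<pi> r^2 / 4^k\<close>; summing over k gives a geometric series.\<close>
lemma nn_integral_inverse_dist_ball_le:
  fixes x :: complex
  assumes r: "0 < r"
  shows "(\<integral>\<^sup>+ y. ennreal (indicator (ball x r) y / norm (x - y)) \<partial>lborel) \<le> ennreal (4 * pi * r)"
proof -
  define f where "f k y = ennreal (2 ^ (k + 1) / r * indicator (ball x (r / 2 ^ k)) y)"
    for k :: nat and y :: complex
  have pointwise: "ennreal (indicator (ball x r) y / norm (x - y)) \<le> (\<Sum>k. f k y)" for y
  proof (cases "y \<in> ball x r \<and> y \<noteq> x")
    case True
    then have \<rho>: "0 < norm (x - y)" "norm (x - y) < r" by (auto simp: dist_norm)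
    obtain k where k: "r / 2 ^ (k + 1) \<le> norm (x - y)" "norm (x - y) < r / 2 ^ k"
      using exists_dyadic_scale[OF \<rho>] by blast
    have "indicator (ball x r) y / norm (x - y) \<le> 2 ^ (k + 1) / r"
      using True k(1) \<rho> r by (simp add: field_simps)
    then have "ennreal (indicator (ball x r) y / norm (x - y)) \<le> f k y"
      using k(2) by (simp add: f_def dist_norm ennreal_leI)
    also have "f k y \<le> (\<Sum>k. f k y)"
      using sum_le_suminf[OF summableI, of "{k}" "\<lambda>k. f k y"] by simp
    finally show ?thesis .
  qed (auto simp: indicator_def)
  have area: "integral\<^sup>N lborel (f k) = ennreal (2 * pi * r * (1/2) ^ k)" for k
  proof -
    have "integral\<^sup>N lborel (f k) =
        ennreal (2 ^ (k + 1) / r) * emeasure lborel (ball x (r / 2 ^ k))"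
      unfolding f_def
      by (subst nn_integral_cmult_indicator[symmetric]) (auto intro!: nn_integral_cong simp: indicator_def)
    also have "emeasure lborel (ball x (r / 2 ^ k)) = ennreal (pi * (r / 2 ^ k) ^ 2)"
      using emeasure_ball[of "r / 2 ^ k" x] r by (simp add: eval_unit_ball_vol)
    also have "ennreal (2 ^ (k + 1) / r) * ennreal (pi * (r / 2 ^ k) ^ 2) =
        ennreal (2 ^ (k + 1) / r * (pi * (r / 2 ^ k) ^ 2))"
      using r by (intro ennreal_mult'[symmetric]) auto
    also have "2 ^ (k + 1) / r * (pi * (r / 2 ^ k) ^ 2) = 2 * pi * r * (1/2) ^ k"
      using r by (simp add: power2_eq_square power_add power_divide field_simps)
    finally show ?thesis .
  qed
  have "(\<integral>\<^sup>+ y. ennreal (indicator (ball x r) y / norm (x - y)) \<partial>lborel) \<le>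
      (\<integral>\<^sup>+ y. (\<Sum>k. f k y) \<partial>lborel)"
    by (intro nn_integral_mono pointwise)
  also have "\<dots> = (\<Sum>k. integral\<^sup>N lborel (f k))"
    unfolding f_def
    by (rule nn_integral_suminf) (intro borel_measurable_indicator borel_measurable_times
        measurable_compose[OF _ measurable_ennreal] borel_measurable_const, auto)
  also have "\<dots> = ennreal (\<Sum>k. 2 * pi * r * (1/2) ^ k)"
    unfolding area using r
    by (intro suminf_ennreal2) (auto intro!: summable_mult summable_geometric)
  also have "(\<Sum>k. 2 * pi * r * (1/2::real) ^ k) = 4 * pi * r"
    using suminf_mult[OF summable_geometric[of "1/2::real"], of "2 * pi * r"]
      suminf_geometric[of "1/2::real"]
    by simp
  finally show ?thesis .
qed

lemma
  fixes x :: complex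
  assumes r: "0 < r"
  shows integrable_inverse_dist_ball: "integrable lborel (\<lambda>y. indicator (ball x r) y / norm (x - y))"
    and integral_inverse_dist_ball_le: "(\<integral>y. indicator (ball x r) y / norm (x - y) \<partial>lborel) \<le> 4 * pi * r"
proof -
  have meas: "(\<lambda>y::complex. indicator (ball x r) y / norm (x - y)) \<in> borel_measurable lborel"
    by (intro borel_measurable_divide borel_measurable_indicator borel_measurable_continuous_onI
        continuous_intros) auto
  have "(\<integral>\<^sup>+ y. ennreal (norm (indicator (ball x r) y / norm (x - y))) \<partial>lborel) =
        (\<integral>\<^sup>+ y. ennreal (indicator (ball x r) y / norm (x - y)) \<partial>lborel)"
    by (intro nn_integral_cong) (auto simp: indicator_def)
  also have "\<dots> \<le> ennreal (4 * pi * r)"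
    by (rule nn_integral_inverse_dist_ball_le[OF r])
  finally show "integrable lborel (\<lambda>y. indicator (ball x r) y / norm (x - y))"
    by (intro integrableI_bounded[OF meas]) (simp add: le_less_trans)
  have "(\<integral>y. indicator (ball x r) y / norm (x - y) \<partial>lborel) =
        enn2real (\<integral>\<^sup>+ y. ennreal (indicator (ball x r) y / norm (x - y)) \<partial>lborel)"
    by (rule integral_eq_nn_integral[OF meas]) auto
  also have "\<dots> \<le> 4 * pi * r"
    using nn_integral_inverse_dist_ball_le[OF r, of x] r by (simp add: enn2real_leI)
  finally show "(\<integral>y. indicator (ball x r) y / norm (x - y) \<partial>lborel) \<le> 4 * pi * r" .
qed

lemma integrable_inverse_dist_off_center:
  fixes x w :: complex
  shows "integrable lborel (\<lambda>y. indicator (ball w r) y / norm (x - y))"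
proof (cases "r > 0")
  case True
  show ?thesis
  proof (rule Bochner_Integration.integrable_bound)
    show "integrable lborel (\<lambda>y. indicator (ball x (r + dist x w)) y / norm (x - y))"
      using True by (intro integrable_inverse_dist_ball) (simp add: add_pos_nonneg)
    have "ball w r \<subseteq> ball x (r + dist x w)"
      by (simp add: ball_subset_ball_iff dist_commute)
    then show "AE y in lborel. norm (indicator (ball w r) y / norm (x - y)) \<le>
        norm (indicator (ball x (r + dist x w)) y / norm (x - y) :: real)"
      by (intro AE_I2) (auto simp: indicator_def)
  qed (intro borel_measurable_divide borel_measurable_indicator borel_measurable_continuous_onI
      continuous_intros, auto)
next
  case False
  then have "ball w r = {}" by simp
  then show ?thesis by (simp only: indicator_simps(2) empty_iff not_False_eq_True) simp
qed

definition cauchy_transform :: "(complex \<Rightarrow> real) \<Rightarrow> complex \<Rightarrow> complex" where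
  "cauchy_transform \<phi> x = (\<integral>y. of_real (\<phi> y) / (x - y) \<partial>lborel)"

text \<open>A density vanishing to first order at w makes \<open>\<phi>(y) / (w - y)^2\<close> integrable, and the
  difference quotients of the Cauchy transform at w converge to minus its integral: split the
  quotient kernel into the part far from w (dominated convergence) and the part in the disc
  \<open>|y - w| < 2 |x - w|\<close>, whose integral is \<open>O(|x - w|)\<close>.\<close>

context
  fixes \<phi> :: "complex \<Rightarrow> real" and w :: complex and R L :: real
  assumes meas: "\<phi> \<in> borel_measurable lborel"
    and supp: "\<And>y. \<phi> y \<noteq> 0 \<Longrightarrow> y \<in> ball w R"
    and lin: "\<And>y. \<bar>\<phi> y\<bar> \<le> L * dist y w" and L: "0 \<le> L" and R: "0 < R"
begin

lemma vanishing_at_center: "\<phi> w = 0"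
  using lin[of w] by simp

lemma borel_measurable_cauchy_quotient:
  "(\<lambda>y. of_real (\<phi> y) / ((x - y) * (w - y))) \<in> borel_measurable lborel"
  by (intro borel_measurable_divide measurable_compose[OF meas] borel_measurable_continuous_onI
      continuous_intros) auto

lemma norm_cauchy_quotient_le:
  "norm (of_real (\<phi> y) / ((x - y) * (w - y))) \<le> L * (indicator (ball w R) y / norm (x - y))"
proof (cases "\<phi> y = 0")
  case True
  then show ?thesis
    using L by simp
next
  case False
  then have y: "y \<in> ball w R" "w - y \<noteq> 0" using supp vanishing_at_center by auto
  have "norm (of_real (\<phi> y) / ((x - y) * (w - y))) = \<bar>\<phi> y\<bar> / norm (w - y) / norm (x - y)"
    by (simp add: norm_divide norm_mult divide_divide_eq_left mult.commute)
  also have "\<dots> \<le> L / norm (x - y)"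
    using lin[of y] y(2) by (intro divide_right_mono) (simp_all add: field_simps dist_norm norm_minus_commute)
  finally show ?thesis using y(1) by simp
qed

lemma integrable_cauchy_quotient:
  "integrable lborel (\<lambda>y. of_real (\<phi> y) / ((x - y) * (w - y)))"
proof (rule Bochner_Integration.integrable_bound)
  show "integrable lborel (\<lambda>y. L * (indicator (ball w R) y / norm (x - y)))"
    by (intro integrable_mult_right integrable_inverse_dist_off_center)
  show "AE y in lborel. norm (of_real (\<phi> y) / ((x - y) * (w - y))) \<le>
      norm (L * (indicator (ball w R) y / norm (x - y)))"
    unfolding real_norm_def by (intro AE_I2 order_trans[OF norm_cauchy_quotient_le abs_ge_self])
qed (rule borel_measurable_cauchy_quotient)

lemma integrable_cauchy_kernel:
  "integrable lborel (\<lambda>y. of_real (\<phi> y) / (x - y))"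
proof (rule Bochner_Integration.integrable_bound)
  show "integrable lborel (\<lambda>y. L * R * (indicator (ball w R) y / norm (x - y)))"
    by (intro integrable_mult_right integrable_inverse_dist_off_center)
  have "norm (of_real (\<phi> y) / (x - y)) \<le> L * R * (indicator (ball w R) y / norm (x - y))" for y
  proof (cases "\<phi> y = 0")
    case False
    then have "dist y w < R" using supp[OF False] by (simp add: dist_commute)
    then have "\<bar>\<phi> y\<bar> \<le> L * R"
      using lin[of y] L by (meson less_imp_le mult_left_mono order_trans)
    then show ?thesis using supp[OF False] by (simp add: norm_divide divide_right_mono)
  qed (use L R in simp)
  then show "AE y in lborel. norm (of_real (\<phi> y) / (x - y)) \<le>
      norm (L * R * (indicator (ball w R) y / norm (x - y)))"
    unfolding real_norm_def by (intro AE_I2 order_trans[OF _ abs_ge_self])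
qed (intro borel_measurable_divide measurable_compose[OF meas] borel_measurable_continuous_onI
      continuous_intros, auto)

lemma cauchy_transform_difference_quotient:
  assumes "x \<noteq> w"
  shows "(cauchy_transform \<phi> x - cauchy_transform \<phi> w) / (x - w) =
    - (\<integral>y. of_real (\<phi> y) / ((x - y) * (w - y)) \<partial>lborel)"
proof -
  have ae: "AE y in lborel. (of_real (\<phi> y) / (x - y) - of_real (\<phi> y) / (w - y)) / (x - w) =
      - (of_real (\<phi> y) / ((x - y) * (w - y)))"
    using AE_lborel_singleton[of x]
  proof (rule AE_mp, intro AE_I2 impI)
    fix y assume "y \<noteq> x"
    show "(of_real (\<phi> y) / (x - y) - of_real (\<phi> y) / (w - y)) / (x - w) =
      - (of_real (\<phi> y) / ((x - y) * (w - y)))"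
    proof (cases "y = w")
      case False
      then have "x - y \<noteq> 0" "w - y \<noteq> 0" "x - w \<noteq> 0" using \<open>y \<noteq> x\<close> assms by auto
      then show ?thesis by (simp add: divide_simps) (simp add: algebra_simps)
    qed (simp add: vanishing_at_center)
  qed
  have "(\<integral>y. (of_real (\<phi> y) / (x - y) - of_real (\<phi> y) / (w - y)) / (x - w) \<partial>lborel) =
      (\<integral>y. - (of_real (\<phi> y) / ((x - y) * (w - y))) \<partial>lborel)"
    by (intro integral_cong_AE[OF _ _ ae] borel_measurable_divide borel_measurable_diff
        borel_measurable_const borel_measurable_uminus borel_measurable_cauchy_quotient
        borel_measurable_integrable integrable_cauchy_kernel)
  then show ?thesis
    by (simp add: cauchy_transform_def integrable_cauchy_kernel)
qed

lemma norm_cauchy_far_part_le: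
  "norm (indicator {y. 2 * dist x w \<le> dist y w} y *\<^sub>R (of_real (\<phi> y) / ((x - y) * (w - y))))
    \<le> 2 * L * (indicator (ball w R) y / norm (w - y))"
proof (cases "2 * dist x w \<le> dist y w \<and> y \<noteq> w")
  case True
  then have "norm (w - y) / 2 \<le> norm (x - y)" "0 < norm (w - y)"
    using dist_triangle[of y w x] by (auto simp: dist_norm norm_minus_commute)
  then have "1 / norm (x - y) \<le> 2 / norm (w - y)"
    by (simp add: divide_simps)
  then have "(L * indicator (ball w R) y) * (1 / norm (x - y)) \<le> (L * indicator (ball w R) y) * (2 / norm (w - y))"
    using L by (intro mult_left_mono) auto
  then have "L * (indicator (ball w R) y / norm (x - y)) \<le> 2 * L * (indicator (ball w R) y / norm (w - y))"
    by (simp add: field_simps)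
  then show ?thesis
    using True norm_cauchy_quotient_le[of y x] by simp
qed (use L vanishing_at_center in auto)

lemma cauchy_far_part_tendsto:
  "((\<lambda>x. \<integral>y. indicator {y. 2 * dist x w \<le> dist y w} y *\<^sub>R (of_real (\<phi> y) / ((x - y) * (w - y))) \<partial>lborel)
     \<longlongrightarrow> (\<integral>y. of_real (\<phi> y) / ((w - y) * (w - y)) \<partial>lborel)) (at w)"
  unfolding tendsto_at_iff_sequentially comp_def
proof (intro allI impI)
  fix X :: "nat \<Rightarrow> complex" assume "\<forall>i. X i \<in> UNIV - {w}" and X: "X \<longlonglongrightarrow> w"
  have pointwise: "(\<lambda>i. indicator {y. 2 * dist (X i) w \<le> dist y w} y
      *\<^sub>R (of_real (\<phi> y) / ((X i - y) * (w - y)))) \<longlonglongrightarrow> of_real (\<phi> y) / ((w - y) * (w - y))" for y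
  proof (cases "y = w")
    case False
    have "eventually (\<lambda>i. 2 * dist (X i) w < dist y w) sequentially"
      using X False by (intro order_tendstoD(2)) (auto intro!: tendsto_eq_intros)
    then have "eventually (\<lambda>i. of_real (\<phi> y) / ((X i - y) * (w - y)) =
        indicator {y. 2 * dist (X i) w \<le> dist y w} y *\<^sub>R (of_real (\<phi> y) / ((X i - y) * (w - y)))) sequentially"
      by eventually_elim simp
    moreover have "(\<lambda>i. of_real (\<phi> y) / ((X i - y) * (w - y))) \<longlonglongrightarrow> of_real (\<phi> y) / ((w - y) * (w - y))"
      using False by (intro tendsto_intros X) auto
    ultimately show ?thesis by (rule Lim_transform_eventually[rotated])
  qed (simp add: vanishing_at_center)
  show "(\<lambda>i. \<integral>y. indicator {y. 2 * dist (X i) w \<le> dist y w} y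
      *\<^sub>R (of_real (\<phi> y) / ((X i - y) * (w - y))) \<partial>lborel) \<longlonglongrightarrow>
      (\<integral>y. of_real (\<phi> y) / ((w - y) * (w - y)) \<partial>lborel)"
  proof (rule integral_dominated_convergence)
    show "integrable lborel (\<lambda>y. 2 * L * (indicator (ball w R) y / norm (w - y)))"
      by (intro integrable_mult_right integrable_inverse_dist_off_center)
    show "(\<lambda>y. indicator {y. 2 * dist (X i) w \<le> dist y w} y
        *\<^sub>R (of_real (\<phi> y) / ((X i - y) * (w - y)))) \<in> borel_measurable lborel" for i
      by (intro borel_measurable_scaleR borel_measurable_indicator borel_measurable_cauchy_quotient)
        (auto intro!: borel_closed closed_Collect_le continuous_intros)
  qed (use borel_measurable_cauchy_quotient pointwise norm_cauchy_far_part_le in auto)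
qed

lemma norm_cauchy_near_part_le:
  "norm (indicator {y. dist y w < 2 * dist x w} y *\<^sub>R (of_real (\<phi> y) / ((x - y) * (w - y))))
    \<le> L * (indicator (ball x (3 * dist x w)) y / norm (x - y))"
proof (cases "dist y w < 2 * dist x w")
  case True
  then have "y \<in> ball x (3 * dist x w)"
    using dist_triangle[of x y w] by (simp add: dist_commute)
  have "norm (of_real (\<phi> y) / ((x - y) * (w - y))) \<le> L * (indicator (ball w R) y / norm (x - y))"
    by (rule norm_cauchy_quotient_le)
  also have "\<dots> \<le> L * (1 / norm (x - y))"
    using L by (intro mult_left_mono divide_right_mono) (auto simp: indicator_def)
  finally show ?thesis
    using True \<open>y \<in> ball x (3 * dist x w)\<close> by simp
qed (use L in simp)

lemma cauchy_near_part_tendsto: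
  "((\<lambda>x. \<integral>y. indicator {y. dist y w < 2 * dist x w} y *\<^sub>R (of_real (\<phi> y) / ((x - y) * (w - y))) \<partial>lborel)
     \<longlongrightarrow> 0) (at w)"
proof (rule Lim_null_comparison)
  show "((\<lambda>x. L * (4 * pi * (3 * dist x w))) \<longlongrightarrow> 0) (at w)"
    by (auto intro!: tendsto_eq_intros)
  show "eventually (\<lambda>x. norm (\<integral>y. indicator {y. dist y w < 2 * dist x w} y *\<^sub>R
      (of_real (\<phi> y) / ((x - y) * (w - y))) \<partial>lborel) \<le> L * (4 * pi * (3 * dist x w))) (at w)"
    unfolding eventually_at_filter
  proof (intro always_eventually allI impI)
    fix x assume "x \<noteq> w"
    then have r: "0 < 3 * dist x w" by simp
    have "integrable lborel (\<lambda>y. L * (indicator (ball x (3 * dist x w)) y / norm (x - y)))"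
      by (intro integrable_mult_right integrable_inverse_dist_ball r)
    moreover have "integrable lborel (\<lambda>y. indicator {y. dist y w < 2 * dist x w} y *\<^sub>R
        (of_real (\<phi> y) / ((x - y) * (w - y))))"
      by (intro integrable_mult_indicator integrable_cauchy_quotient)
        (auto intro!: borel_open open_Collect_less continuous_intros)
    ultimately have "norm (\<integral>y. indicator {y. dist y w < 2 * dist x w} y *\<^sub>R
        (of_real (\<phi> y) / ((x - y) * (w - y))) \<partial>lborel)
      \<le> (\<integral>y. L * (indicator (ball x (3 * dist x w)) y / norm (x - y)) \<partial>lborel)"
      using norm_cauchy_near_part_le by (intro Bochner_Integration.integral_norm_bound_integral)
    also have "\<dots> = L * (\<integral>y. indicator (ball x (3 * dist x w)) y / norm (x - y) \<partial>lborel)"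
      by (rule integral_mult_right_zero)
    also have "\<dots> \<le> L * (4 * pi * (3 * dist x w))"
      using integral_inverse_dist_ball_le[OF r, of x] L by (rule mult_left_mono)
    finally show "norm (\<integral>y. indicator {y. dist y w < 2 * dist x w} y *\<^sub>R
        (of_real (\<phi> y) / ((x - y) * (w - y))) \<partial>lborel) \<le> L * (4 * pi * (3 * dist x w))" .
  qed
qed

lemma cauchy_transform_has_field_derivative:
  "(cauchy_transform \<phi> has_field_derivative - (\<integral>y. of_real (\<phi> y) / (w - y)\<^sup>2 \<partial>lborel)) (at w)"
proof -
  define far where "far x = (\<integral>y. indicator {y. 2 * dist x w \<le> dist y w} y *\<^sub>R
      (of_real (\<phi> y) / ((x - y) * (w - y))) \<partial>lborel)" for x
  define near where "near x = (\<integral>y. indicator {y. dist y w < 2 * dist x w} y *\<^sub>R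
      (of_real (\<phi> y) / ((x - y) * (w - y))) \<partial>lborel)" for x
  have split: "(cauchy_transform \<phi> x - cauchy_transform \<phi> w) / (x - w) = - (far x + near x)"
    if "x \<noteq> w" for x
  proof -
    have "(\<lambda>y. indicator {y. 2 * dist x w \<le> dist y w} y *\<^sub>R (of_real (\<phi> y) / ((x - y) * (w - y))) +
        indicator {y. dist y w < 2 * dist x w} y *\<^sub>R (of_real (\<phi> y) / ((x - y) * (w - y)))) =
      (\<lambda>y. of_real (\<phi> y) / ((x - y) * (w - y)))"
      by (auto simp: indicator_def)
    moreover have "far x + near x = (\<integral>y. indicator {y. 2 * dist x w \<le> dist y w} y *\<^sub>R
        (of_real (\<phi> y) / ((x - y) * (w - y))) + indicator {y. dist y w < 2 * dist x w} y *\<^sub>R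
        (of_real (\<phi> y) / ((x - y) * (w - y))) \<partial>lborel)"
      unfolding far_def near_def
      by (intro Bochner_Integration.integral_add[symmetric] integrable_mult_indicator
          integrable_cauchy_quotient) (auto intro!: borel_open borel_closed open_Collect_less
          closed_Collect_le continuous_intros)
    ultimately show ?thesis
      using cauchy_transform_difference_quotient[OF that] by simp
  qed
  have "((\<lambda>x. - (far x + near x)) \<longlongrightarrow>
      - ((\<integral>y. of_real (\<phi> y) / ((w - y) * (w - y)) \<partial>lborel) + 0)) (at w)"
    unfolding far_def near_def
    by (intro tendsto_intros cauchy_far_part_tendsto cauchy_near_part_tendsto)
  then have "((\<lambda>x. - (far x + near x)) \<longlongrightarrow> - (\<integral>y. of_real (\<phi> y) / (w - y)\<^sup>2 \<partial>lborel)) (at w)"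
    by (simp add: power2_eq_square)
  then have "((\<lambda>x. (cauchy_transform \<phi> x - cauchy_transform \<phi> w) / (x - w)) \<longlongrightarrow>
      - (\<integral>y. of_real (\<phi> y) / (w - y)\<^sup>2 \<partial>lborel)) (at w)"
    by (rule Lim_transform_eventually) (auto simp: eventually_at_filter split intro!: always_eventually)
  then show ?thesis
    by (simp add: has_field_derivative_iff)
qed

end

lemma differentiable_vanishing_linear_bound:
  fixes \<phi> :: "'a::real_normed_vector \<Rightarrow> real"
  assumes "\<phi> differentiable (at w)" and "\<phi> w = 0" and bdd: "\<And>y. \<bar>\<phi> y\<bar> \<le> M"
  obtains L where "0 \<le> L" "\<And>y. \<bar>\<phi> y\<bar> \<le> L * dist y w"
proof -
  obtain D where D: "(\<phi> has_derivative D) (at w)"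
    using assms(1) by (auto simp: differentiable_def)
  then have "\<forall>e>0. \<exists>d>0. \<forall>y. norm (y - w) < d \<longrightarrow>
      norm (\<phi> y - \<phi> w - D (y - w)) \<le> e * norm (y - w)"
    unfolding has_derivative_at_alt by blast
  then obtain \<delta> where \<delta>: "\<delta> > 0"
    and near: "\<And>y. norm (y - w) < \<delta> \<Longrightarrow> \<bar>\<phi> y - D (y - w)\<bar> \<le> norm (y - w)"
    using assms(2) by (auto dest: spec[of _ 1])
  obtain K where K: "K > 0" "\<And>h. norm (D h) \<le> norm h * K"
    using bounded_linear.pos_bounded[OF has_derivative_bounded_linear[OF D]] by blast
  have M: "0 \<le> M" using bdd[of w] by simp
  have "\<bar>\<phi> y\<bar> \<le> (K + 1 + M / \<delta>) * dist y w" for y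
  proof (cases "dist y w < \<delta>")
    case True
    then have "\<bar>\<phi> y\<bar> \<le> (K + 1) * dist y w"
      using near[of y] K(2)[of "y - w"] by (simp add: dist_norm algebra_simps)
    also have "\<dots> \<le> (K + 1 + M / \<delta>) * dist y w"
      using M \<delta> by (intro mult_right_mono) auto
    finally show ?thesis .
  next
    case False
    then have "M \<le> M / \<delta> * dist y w"
      using M \<delta> by (simp add: field_simps mult_left_mono)
    also have "\<dots> \<le> (K + 1 + M / \<delta>) * dist y w"
      using K \<delta> by (intro mult_right_mono) auto
    finally show ?thesis using bdd[of y] by linarith
  qed
  moreover have "0 \<le> K + 1 + M / \<delta>" using K M \<delta> by simp
  ultimately show ?thesis using that by blast
qed

lemma velocity_has_field_derivative:
  fixes \<phi> :: "complex \<Rightarrow> real"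
  assumes cont: "continuous_on UNIV \<phi>" and bdd: "\<And>y. \<bar>\<phi> y\<bar> \<le> M"
    and supp: "bounded {y. \<phi> y \<noteq> 0}"
    and diff: "\<phi> differentiable (at w)" and zero: "\<phi> w = 0"
  shows "((\<lambda>x. \<integral>y. kernel \<theta> (x - y) * of_real (\<phi> y) \<partial>lborel) has_field_derivative
    - exp (\<i> * of_real \<theta>) / (2 * of_real pi) * (\<integral>y. of_real (\<phi> y) / (w - y)\<^sup>2 \<partial>lborel)) (at w)"
proof -
  obtain L where L: "0 \<le> L" "\<And>y. \<bar>\<phi> y\<bar> \<le> L * dist y w"
    using differentiable_vanishing_linear_bound[OF diff zero bdd] by blast
  obtain R where R: "0 < R" "{y. \<phi> y \<noteq> 0} \<subseteq> ball w R"
    using bounded_subset_ballD[OF supp] by blast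
  define c where "c = exp (\<i> * of_real \<theta>) / (2 * of_real pi)"
  have eq: "(\<lambda>x. \<integral>y. kernel \<theta> (x - y) * of_real (\<phi> y) \<partial>lborel) = (\<lambda>x. c * cauchy_transform \<phi> x)"
  proof
    fix x
    have "kernel \<theta> (x - y) * of_real (\<phi> y) = c * (of_real (\<phi> y) / (x - y))" for y
      by (cases "x = y") (simp_all add: kernel_def c_def)
    then show "(\<integral>y. kernel \<theta> (x - y) * of_real (\<phi> y) \<partial>lborel) = c * cauchy_transform \<phi> x"
      unfolding cauchy_transform_def by (simp only: integral_mult_right_zero)
  qed
  have "(cauchy_transform \<phi> has_field_derivative - (\<integral>y. of_real (\<phi> y) / (w - y)\<^sup>2 \<partial>lborel)) (at w)"
    using R L cont by (intro cauchy_transform_has_field_derivative) (auto intro: borel_measurable_continuous_onI)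
  from DERIV_cmult[OF this, of c] show ?thesis
    unfolding eq by (simp add: c_def)
qed

lemma bounded_support_transport:
  fixes Y :: "'a::heine_borel \<Rightarrow> 'b::metric_space" and \<phi>0 :: "'a \<Rightarrow> 'c::zero"
  assumes "continuous_on UNIV Y" "surj Y" "\<And>z. \<phi> (Y z) = \<phi>0 z" "bounded {z. \<phi>0 z \<noteq> 0}"
  shows "bounded {y. \<phi> y \<noteq> 0}"
proof -
  have "{y. \<phi> y \<noteq> 0} \<subseteq> Y ` {z. \<phi>0 z \<noteq> 0}"
  proof
    fix y assume "y \<in> {y. \<phi> y \<noteq> 0}"
    moreover obtain z where "y = Y z" using assms(2) by (metis surjD)
    ultimately show "y \<in> Y ` {z. \<phi>0 z \<noteq> 0}" using assms(3) by auto
  qed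
  also have "\<dots> \<subseteq> Y ` closure {z. \<phi>0 z \<noteq> 0}"
    by (intro image_mono closure_subset)
  moreover have "compact (Y ` closure {z. \<phi>0 z \<noteq> 0})"
    using assms(1,4) by (intro compact_continuous_image) (auto intro: continuous_on_subset)
  ultimately show ?thesis
    by (meson bounded_subset compact_imp_bounded)
qed

lemma smooth_on_UNIV_differentiable:
  assumes "smooth_on UNIV f"
  shows "f differentiable (at x)"
proof -
  obtain U g where U: "UNIV \<subseteq> U" and gf: "\<forall>x\<in>UNIV. g x = f x"
    and "\<forall>ds. iter_dd ds g differentiable_on U"
    using assms unfolding smooth_on_def by blast
  then have "iter_dd [] g differentiable_on U" by blast
  moreover have "g = f" "U = UNIV" using U gf by auto
  ultimately have "f differentiable_on UNIV"
    by simp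
  then show ?thesis
    by (simp add: differentiable_on_def)
qed

lemma has_derivative_partial_snd:
  fixes G :: "real \<times> 'a::real_normed_vector \<Rightarrow> 'b::real_normed_vector"
  assumes "open U" "(s, z) \<in> U" "G differentiable_on U"
  shows "((\<lambda>h. G (s, h)) has_derivative (\<lambda>h. frechet_derivative G (at (s, z)) (0, h))) (at z)"
proof -
  have "((\<lambda>h. (s, h)) has_derivative (\<lambda>h. (0, h))) (at z)"
    by (intro has_derivative_Pair has_derivative_const has_derivative_ident)
  from has_derivative_compose[OF this has_derivative_at_of_differentiable_on_open[OF assms(3,1,2)]]
  show ?thesis by simp
qed

lemma has_vector_derivative_partial_fst:
  fixes G :: "real \<times> 'a::real_normed_vector \<Rightarrow> 'b::real_normed_vector"
  assumes "open U" "(s, z) \<in> U" "G differentiable_on U"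
  shows "((\<lambda>\<sigma>. G (\<sigma>, z)) has_vector_derivative frechet_derivative G (at (s, z)) (1, 0)) (at s)"
proof -
  have dG: "(G has_derivative frechet_derivative G (at (s, z))) (at (s, z))"
    by (rule has_derivative_at_of_differentiable_on_open[OF assms(3,1,2)])
  have "((\<lambda>h. (h, z)) has_derivative (\<lambda>h. (h, 0))) (at s)"
    by (intro has_derivative_Pair has_derivative_const has_derivative_ident)
  from has_derivative_compose[OF this dG]
  have "((\<lambda>\<sigma>. G (\<sigma>, z)) has_derivative (\<lambda>h. frechet_derivative G (at (s, z)) (h, 0))) (at s)" .
  moreover have "(\<lambda>h. frechet_derivative G (at (s, z)) (h, 0)) = (\<lambda>h. h *\<^sub>R frechet_derivative G (at (s, z)) (1, 0))"
  proof
    fix h :: real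
    have "(h, 0) = h *\<^sub>R (1, 0 :: 'a)" by simp
    then show "frechet_derivative G (at (s, z)) (h, 0) = h *\<^sub>R frechet_derivative G (at (s, z)) (1, 0)"
      using linear.scaleR[OF has_derivative_linear[OF dG]] by metis
  qed
  ultimately show ?thesis
    by (simp add: has_vector_derivative_def)
qed

lemma smooth_on_time_slice_differentiable:
  fixes f :: "real \<Rightarrow> 'a::real_normed_vector \<Rightarrow> 'b::real_normed_vector"
  assumes "smooth_on ({0..} \<times> UNIV) (\<lambda>(t, x). f t x)" "0 \<le> s"
  shows "f s differentiable (at x)"
proof -
  obtain U G where U: "open U" "{0..} \<times> UNIV \<subseteq> U"
    and GX: "\<forall>p\<in>{0..} \<times> UNIV. G p = (\<lambda>(t, x). f t x) p"
    and dG: "\<And>ds. iter_dd ds G differentiable_on U"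
    using assms(1) unfolding smooth_on_def by (elim exE conjE) (rule that, assumption+, blast)
  have "(s, x) \<in> U" using U(2) assms(2) by auto
  from has_derivative_partial_snd[OF U(1) this] dG[of "[]"]
  have "((\<lambda>h. G (s, h)) has_derivative (\<lambda>h. frechet_derivative G (at (s, x)) (0, h))) (at x)"
    by simp
  moreover have "(\<lambda>h. G (s, h)) = f s" using GX assms(2) by auto
  ultimately show ?thesis
    unfolding differentiable_def by auto
qed

lemma has_vector_derivative_space_derivative:
  fixes G :: "real \<times> 'a::real_inner \<Rightarrow> 'a"
  assumes U: "open U" and p: "(t, z) \<in> U" and dG: "\<And>ds. iter_dd ds G differentiable_on U"
  shows "((\<lambda>s. frechet_derivative G (at (s, z)) (0, h)) has_vector_derivative
    frechet_derivative (\<lambda>p. frechet_derivative G (at p) (1, 0)) (at (t, z)) (0, h)) (at t)"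
proof -
  have "frechet_derivative (\<lambda>p. frechet_derivative G (at p) (0, h)) (at (t, z)) (1, 0) =
      frechet_derivative (\<lambda>p. frechet_derivative G (at p) (1, 0)) (at (t, z)) (0, h)"
    using dG[of "[]"] dG[of "[(0, h)]"] dG[of "[(1, 0)]"]
      dG[of "[(1, 0), (0, h)]"] dG[of "[(0, h), (1, 0)]"]
    by (intro frechet_derivative_mixed_commute[OF U p]) (simp_all add: differentiable_imp_continuous_on)
  with has_vector_derivative_partial_fst[OF U p dG[of "[(0, h)]"]] show ?thesis
    by simp
qed

lemma flow_jacobian_has_vector_derivative:
  fixes X v :: "real \<Rightarrow> 'a::real_inner \<Rightarrow> 'a"
  assumes smooth: "smooth_on ({0..} \<times> UNIV) (\<lambda>(t, z). X t z)"
    and ode: "\<And>t y. 0 \<le> t \<Longrightarrow> ((\<lambda>s. X s y) has_vector_derivative v t (X t y)) (at t within {0..})"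
    and dv: "(v t has_derivative B) (at (X t z))"
    and t: "0 \<le> t"
  shows "((\<lambda>s. frechet_derivative (X s) (at z) h) has_vector_derivative
      B (frechet_derivative (X t) (at z) h)) (at t within {0..})"
proof -
  obtain U G where U: "open U" "{0..} \<times> UNIV \<subseteq> U"
    and GX: "\<forall>p\<in>{0..} \<times> UNIV. G p = (\<lambda>(t, z). X t z) p"
    and dG: "\<And>ds. iter_dd ds G differentiable_on U"
    using smooth unfolding smooth_on_def by (elim exE conjE) (rule that, assumption+, blast)
  have G_diff: "G differentiable_on U" using dG[of "[]"] by simp
  define DG where "DG p = frechet_derivative G (at p)" for p
  have inU: "(s, y) \<in> U" if "0 \<le> s" for s y using U(2) that by auto
  have GX': "X s = (\<lambda>y. G (s, y))" if "0 \<le> s" for s using GX that by auto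
  have dX: "(X s has_derivative (\<lambda>h. DG (s, z) (0, h))) (at z)" if "0 \<le> s" for s
    unfolding GX'[OF that] DG_def by (rule has_derivative_partial_snd[OF U(1) inU[OF that] G_diff])
  have velocity: "DG (t, y) (1, 0) = v t (X t y)" for y
  proof -
    have "((\<lambda>s. G (s, y)) has_vector_derivative DG (t, y) (1, 0)) (at t within {t..t+1})"
      unfolding DG_def
      by (rule has_vector_derivative_at_within[OF has_vector_derivative_partial_fst[OF U(1) inU[OF t] G_diff]])
    then have "((\<lambda>s. X s y) has_vector_derivative DG (t, y) (1, 0)) (at t within {t..t+1})"
      by (rule has_vector_derivative_transform[rotated 2]) (use t GX' in auto)
    moreover have "((\<lambda>s. X s y) has_vector_derivative v t (X t y)) (at t within {t..t+1})"
      using t by (intro has_vector_derivative_within_subset[OF ode]) auto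
    ultimately show ?thesis
      using vector_derivative_unique_within_closed_interval[of t "t+1" t] by simp
  qed
  have "((\<lambda>y. DG (t, y) (1, 0)) has_derivative (\<lambda>h. B (DG (t, z) (0, h)))) (at z)"
    unfolding velocity by (rule has_derivative_compose[OF dX[OF t] dv])
  moreover have "((\<lambda>y. DG (t, y) (1, 0)) has_derivative
      (\<lambda>h. frechet_derivative (\<lambda>p. DG p (1, 0)) (at (t, z)) (0, h))) (at z)"
    using dG[of "[(1, 0)]"] unfolding DG_def by (intro has_derivative_partial_snd[OF U(1) inU[OF t]]) simp
  ultimately have "(\<lambda>h. B (DG (t, z) (0, h))) = (\<lambda>h. frechet_derivative (\<lambda>p. DG p (1, 0)) (at (t, z)) (0, h))"
    by (rule has_derivative_unique)
  from fun_cong[OF this, of h]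
  have "((\<lambda>s. DG (s, z) (0, h)) has_vector_derivative B (DG (t, z) (0, h))) (at t)"
    using has_vector_derivative_space_derivative[OF U(1) inU[OF t, of z] dG, of h] by (simp add: DG_def)
  then have dJ: "((\<lambda>s. DG (s, z) (0, h)) has_vector_derivative B (DG (t, z) (0, h))) (at t within {0..})"
    by (rule has_vector_derivative_at_within)
  have J: "frechet_derivative (X s) (at z) h = DG (s, z) (0, h)" if "s \<in> {0..}" for s
    using dX[of s] that by (simp add: frechet_derivative_at[symmetric])
  show ?thesis
    using has_vector_derivative_transform[OF _ J dJ] t J[of t] by simp
qed

lemma has_derivative_nonzero_of_left_inverse:
  assumes df: "(f has_derivative f') (at z)" and dg: "g differentiable (at (f z))"
    and inv: "\<And>x. g (f x) = x" and h: "h \<noteq> 0"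
  shows "f' h \<noteq> 0"
proof
  assume f'h: "f' h = 0"
  obtain g' where g': "(g has_derivative g') (at (f z))"
    using dg by (auto simp: differentiable_def)
  have "((\<lambda>x. g (f x)) has_derivative (\<lambda>x. g' (f' x))) (at z)"
    by (rule has_derivative_compose[OF df g'])
  then have "(\<lambda>x. g' (f' x)) = (\<lambda>x. x)"
    unfolding inv by (rule has_derivative_unique[OF _ has_derivative_ident])
  then have "g' 0 = h" using f'h by (metis)
  moreover have "g' 0 = 0"
    using has_derivative_linear[OF g'] by (rule linear_0)
  ultimately show False using h by simp
qed

lemma linear_ode_ratio_constant:
  fixes P R :: "real \<Rightarrow> complex"
  assumes t: "0 \<le> t"
    and dP: "\<And>s. 0 \<le> s \<Longrightarrow> (P has_vector_derivative Q s * P s) (at s within {0..})"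
    and dR: "\<And>s. 0 \<le> s \<Longrightarrow> (R has_vector_derivative Q s * R s) (at s within {0..})"
    and P: "\<And>s. 0 \<le> s \<Longrightarrow> P s \<noteq> 0"
  shows "R t / P t = R 0 / P 0"
proof -
  have "((\<lambda>s. R s / P s) has_derivative (\<lambda>h. 0)) (at s within {0..t})" if s: "s \<in> {0..t}" for s
  proof -
    have "(P has_derivative (\<lambda>h. h *\<^sub>R (Q s * P s))) (at s within {0..t})"
      "(R has_derivative (\<lambda>h. h *\<^sub>R (Q s * R s))) (at s within {0..t})"
      using dP[of s] dR[of s] s unfolding has_vector_derivative_def
      by (auto intro: has_derivative_subset)
    from has_derivative_divide'[OF this(2,1)] P[of s] s
    show ?thesis
      by (simp add: scaleR_conv_of_real algebra_simps)
  qed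
  then obtain c where "\<forall>s\<in>{0..t}. R s / P s = c"
    using has_derivative_zero_constant[OF convex_real_interval(5)] by blast
  then show ?thesis using t by auto
qed

lemma dbar_eq_0_iff:
  assumes "(f has_derivative f') (at z)"
  shows "dbar f z = 0 \<longleftrightarrow> f' \<i> = \<i> * f' 1"
proof -
  have "dbar f z = (f' 1 + \<i> * f' \<i>) / 2"
    using frechet_derivative_at[OF assms] by (simp add: dbar_def)
  also have "f' 1 + \<i> * f' \<i> = - \<i> * (\<i> * f' 1 - f' \<i>)"
    by (simp add: algebra_simps)
  finally show ?thesis by auto
qed

lemma velocity_has_field_derivative_along_transport:
  fixes \<phi> \<phi>0 :: "complex \<Rightarrow> real" and Y V :: "complex \<Rightarrow> complex"
  assumes diff: "\<And>y. \<phi> differentiable (at y)" and Y: "\<And>x. Y differentiable (at x)" "surj Y"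
    and along: "\<And>z. \<phi> (Y z) = \<phi>0 z"
    and bdd: "\<And>z. \<bar>\<phi>0 z\<bar> \<le> M" and supp: "bounded {z. \<phi>0 z \<noteq> 0}" and zero: "\<phi>0 z = 0"
    and V: "\<And>x. V x = (\<integral>y. kernel \<theta> (x - y) * of_real (\<phi> y) \<partial>lborel)"
  shows "\<exists>Q. (V has_field_derivative Q) (at (Y z))"
proof -
  have "\<bar>\<phi> y\<bar> \<le> M" for y
    using Y(2) along bdd by (metis surjD)
  moreover have "continuous_on UNIV \<phi>" "continuous_on UNIV Y"
    using diff Y(1) by (simp_all add: continuous_at_imp_continuous_on differentiable_imp_continuous_within)
  moreover have "V = (\<lambda>x. \<integral>y. kernel \<theta> (x - y) * of_real (\<phi> y) \<partial>lborel)"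
    using V by blast
  moreover have "\<phi> (Y z) = 0"
    using along zero by simp
  ultimately show ?thesis
    using velocity_has_field_derivative[OF _ _ bounded_support_transport[OF _ Y(2) along supp] diff]
    by blast
qed

theorem lemma4:
  fixes \<theta> :: real
    and \<omega>0 :: "complex \<Rightarrow> real"
    and \<omega>0e :: "real \<Rightarrow> complex \<Rightarrow> real"
    and \<omega> :: "real \<Rightarrow> real \<Rightarrow> complex \<Rightarrow> real"
    and v :: "real \<Rightarrow> real \<Rightarrow> complex \<Rightarrow> complex"
    and X :: "real \<Rightarrow> real \<Rightarrow> complex \<Rightarrow> complex"
  assumes theta: "0 \<le> \<theta>" "\<theta> \<le> 2 * pi"
    and w0_meas: "\<omega>0 \<in> borel_measurable lborel"
    and w0_bdd: "\<exists>M. \<forall>z. \<bar>\<omega>0 z\<bar> \<le> M"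
    and w0_supp: "bounded {z. \<omega>0 z \<noteq> 0}"
    and w0e_smooth: "\<And>\<epsilon>. \<epsilon> > 0 \<Longrightarrow> smooth_on UNIV (\<omega>0e \<epsilon>)"
    and w0e_supp: "\<And>\<epsilon>. \<epsilon> > 0 \<Longrightarrow> bounded {z. \<omega>0e \<epsilon> z \<noteq> 0}"
    and w0e_inf: "\<And>\<epsilon> M. \<epsilon> > 0 \<Longrightarrow> (AE z in lborel. \<bar>\<omega>0 z\<bar> \<le> M) \<Longrightarrow> \<forall>z. \<bar>\<omega>0e \<epsilon> z\<bar> \<le> M"
    and w0e_L1: "\<And>\<epsilon>. \<epsilon> > 0 \<Longrightarrow>
        (LINT z|lborel. \<bar>\<omega>0e \<epsilon> z\<bar>) \<le> (LINT z|lborel. \<bar>\<omega>0 z\<bar>)"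
    and w0e_conv: "((\<lambda>\<epsilon>. LINT z|lborel. \<bar>\<omega>0e \<epsilon> z - \<omega>0 z\<bar>) \<longlongrightarrow> 0) (at_right 0)"
    and w_smooth: "\<And>\<epsilon>. \<epsilon> > 0 \<Longrightarrow> smooth_on ({0..} \<times> UNIV) (\<lambda>(t, x). \<omega> \<epsilon> t x)"
    and w_init: "\<And>\<epsilon> x. \<epsilon> > 0 \<Longrightarrow> \<omega> \<epsilon> 0 x = \<omega>0e \<epsilon> x"
    and v_def: "\<And>\<epsilon> t x. \<epsilon> > 0 \<Longrightarrow> t \<ge> 0 \<Longrightarrow>
        v \<epsilon> t x = (\<integral>y. kernel \<theta> (x - y) * of_real (\<omega> \<epsilon> t y) \<partial>lborel)"
    and transport: "\<And>\<epsilon> t x. \<epsilon> > 0 \<Longrightarrow> t \<ge> 0 \<Longrightarrow>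
        ((\<lambda>s. \<omega> \<epsilon> s x) has_real_derivative
           (- frechet_derivative (\<omega> \<epsilon> t) (at x) (v \<epsilon> t x))) (at t within {0..})"
    and X_smooth: "\<And>\<epsilon>. \<epsilon> > 0 \<Longrightarrow> smooth_on ({0..} \<times> UNIV) (\<lambda>(t, z). X \<epsilon> t z)"
    and X_diffeo: "\<And>\<epsilon> t. \<epsilon> > 0 \<Longrightarrow> t \<ge> 0 \<Longrightarrow> bij (X \<epsilon> t) \<and> smooth_on UNIV (inv (X \<epsilon> t))"
    and X_ode: "\<And>\<epsilon> t z. \<epsilon> > 0 \<Longrightarrow> t \<ge> 0 \<Longrightarrow>
        ((\<lambda>s. X \<epsilon> s z) has_vector_derivative v \<epsilon> t (X \<epsilon> t z)) (at t within {0..})"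
    and X_init: "\<And>\<epsilon> z. \<epsilon> > 0 \<Longrightarrow> X \<epsilon> 0 z = z"
    and w_along_X: "\<And>\<epsilon> t z. \<epsilon> > 0 \<Longrightarrow> t \<ge> 0 \<Longrightarrow> \<omega> \<epsilon> t (X \<epsilon> t z) = \<omega>0e \<epsilon> z"
  shows "\<forall>\<epsilon>>0. \<forall>t\<ge>0. \<forall>z. \<omega>0e \<epsilon> z = 0 \<longrightarrow> dbar (X \<epsilon> t) z = 0"
proof (intro allI impI)
  fix \<epsilon> t :: real and z :: complex
  assume \<epsilon>: "\<epsilon> > 0" and t: "t \<ge> 0" and z0: "\<omega>0e \<epsilon> z = 0"
  obtain M where M: "\<And>y. \<bar>\<omega>0e \<epsilon> y\<bar> \<le> M"
    using w0_bdd w0e_inf[OF \<epsilon>] by (metis AE_I2)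
  have "\<exists>Q. (v \<epsilon> s has_field_derivative Q) (at (X \<epsilon> s z))" if s: "0 \<le> s" for s
    using X_diffeo[OF \<epsilon> s]
    by (intro velocity_has_field_derivative_along_transport[OF
          smooth_on_time_slice_differentiable[OF w_smooth[OF \<epsilon>] s]
          smooth_on_time_slice_differentiable[OF X_smooth[OF \<epsilon>] s] _
          w_along_X[OF \<epsilon> s] M w0e_supp[OF \<epsilon>] z0 v_def[OF \<epsilon> s]])
      (simp add: bij_def)
  then obtain Q where Q: "\<And>s. 0 \<le> s \<Longrightarrow> (v \<epsilon> s has_field_derivative Q s) (at (X \<epsilon> s z))"
    by metis
  define J where "J s = frechet_derivative (X \<epsilon> s) (at z)" for s
  have dX: "(X \<epsilon> s has_derivative J s) (at z)" if "0 \<le> s" for s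
    unfolding J_def using smooth_on_time_slice_differentiable[OF X_smooth[OF \<epsilon>] that]
    by (rule frechet_derivative_works[THEN iffD1])
  have dJ: "((\<lambda>s. J s h) has_vector_derivative Q s * J s h) (at s within {0..})" if "0 \<le> s" for s h
    unfolding J_def using Q[OF that] that
    by (intro flow_jacobian_has_vector_derivative[OF X_smooth[OF \<epsilon>] X_ode[OF \<epsilon>]])
      (simp_all add: has_field_derivative_def)
  have J1: "J s 1 \<noteq> 0" if "0 \<le> s" for s
    using X_diffeo[OF \<epsilon> that]
    by (intro has_derivative_nonzero_of_left_inverse[OF dX[OF that]] smooth_on_UNIV_differentiable)
      (auto simp: bij_def)
  have "X \<epsilon> 0 = (\<lambda>z. z)"
    using X_init[OF \<epsilon>] by (rule ext)
  then have "J 0 = (\<lambda>h. h)"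
    by (simp add: J_def)
  then have "J t \<i> = \<i> * J t 1"
    using linear_ode_ratio_constant[OF t dJ dJ J1, of \<i>] J1[OF t] by (simp add: field_simps)
  then show "dbar (X \<epsilon> t) z = 0"
    using dbar_eq_0_iff[OF dX[OF t]] by simp
qed

end
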